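(* Assume binary treatments $A_m\in\{0,1\}$, coarse consistency, and $0<P(A_m=1\mid\bar L_m,T\ge m)<1$ almost surely on $\{T\ge m\}$ for every $m$. Let $c(\bar l_m,k)$ be the true bias function defined in the context. Then for all $0\le m<k\le K$, almost surely on $\{T\ge m\}$, $$E[H^{c,a}_{mk}(\gamma^{c*})-H^c_{m,k-1}(\gamma^{c*})\mid\bar L_m,T\ge m,A_m]=E[H^{c,a}_{mk}(\gamma^{c*})-H^c_{m,k-1}(\gamma^{c*})\mid\bar L_m,T\ge m].$$ That is, the left-hand conditional expectation does not depend on $A_m$.
   Context: **Data.** Subjects are observed at times $0,\dots,K$. At each time $m$ the data $(Z_m,Y_m,A_m)$ are collected in that temporal order: - $A_m\in\{0,1\}$ is the treatment, with baseline level $0$; - $Y_m$ is the outcome; - $Z_m$ are covariates. For a time-varying variable $X$, write $\bar X_m=(X_0,\dots,X_m)$; negative-index variables are null. Define $\bar L_m=(\bar Z_m,\bar Y_{m-1},\bar A_{m-1})$. **Treatment initiation.** $T=\min\{m:A_m\neq0\}\in\{0,\dots,K,\infty\}$. **Counterfactuals.** $Y_k(m,1)$ is the counterfactual outcome at time $k$ under first initiating treatment at time $m$. $Y_k(\infty)$ is the counterfactual under never initiating. Also $Y_k(m,1)=Y_k(\infty)$ for $k\le m$. **Coarse consistency.** $Y_k=Y_k(T,A_T)$ on $\{T<k\}$ and $Y_k=Y_k(\infty)$ on $\{T\ge k\}$. **Coarse blip functions.** $$\gamma^{c*}_{mk}(\bar l_m,a_m)\equiv E[Y_k(m,a_m)-Y_k(\infty)\mid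 T=m,A_m=a_m,\bar L_m=\bar l_m].$$ **Blipped-down outcomes.** - $H^c_{mk}(\gamma^c)\equiv Y_k-\sum_{j=m}^{k-1}\gamma^c_{jk}(\bar L_j,A_j)\mathbb 1\{T=j\}$ for $k>m$; - $H^c_{mm}(\gamma^c)\equiv Y_m$. **Bias function.** $$c(\bar l_m,k)\equiv E[Y_k(\infty)-Y_{k-1}(\infty)\mid\bar L_m=\bar l_m,T\ge m,A_m=1]-E[Y_k(\infty)-Y_{k-1}(\infty)\mid\bar L_m=\bar l_m,T\ge m,A_m=0].$$ **Bias-adjusted blipped-down outcome.** $$H^{c,a}_{mk}(\gamma^c)\equiv H^c_{mk}(\gamma^c)-\sum_{j=m}^{k}\Pr(1-A_j\mid\bar L_j,T\ge j)(2A_j-1)\,c(\bar L_j,k)\,\mathbb 1\{T\ge j\},$$ where $\Pr(1-A_j\mid\bar L_j,T\ge j)$ denotes $P(A_j=1-a\mid\bar L_j,T\ge j)$ evaluated at $a=A_j$. *)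

theory Defs
  imports "HOL-Probability.Probability"
begin

definition T_init :: "nat \<Rightarrow> (nat \<Rightarrow> 'a \<Rightarrow> real) \<Rightarrow> 'a \<Rightarrow> enat" where
  "T_init K A x = (if \<exists>m\<le>K. A m x \<noteq> 0 then enat (LEAST m. A m x \<noteq> 0) else \<infinity>)"

definition gen_by :: "'a measure \<Rightarrow> ('a \<Rightarrow> 'b) \<Rightarrow> 'b measure \<Rightarrow> 'a set set" where
  "gen_by M X N = {X -` B \<inter> space M | B. B \<in> sets N}"

(* sigma-algebra generated by Lbar_m = (Zbar_m, Ybar_{m-1}, Abar_{m-1}) *)
definition L_sigma :: "'a measure \<Rightarrow> 'b measure \<Rightarrow> (nat \<Rightarrow> 'a \<Rightarrow> 'b) \<Rightarrow> (nat \<Rightarrow> 'a \<Rightarrow> real)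
    \<Rightarrow> (nat \<Rightarrow> 'a \<Rightarrow> real) \<Rightarrow> nat \<Rightarrow> 'a measure" where
  "L_sigma M MZ Z Y A m = sigma (space M)
     ((\<Union>j\<in>{..m}. gen_by M (Z j) MZ) \<union> (\<Union>j\<in>{..<m}. gen_by M (Y j) borel)
      \<union> (\<Union>j\<in>{..<m}. gen_by M (A j) borel))"

definition LA_sigma :: "'a measure \<Rightarrow> 'b measure \<Rightarrow> (nat \<Rightarrow> 'a \<Rightarrow> 'b) \<Rightarrow> (nat \<Rightarrow> 'a \<Rightarrow> real)
    \<Rightarrow> (nat \<Rightarrow> 'a \<Rightarrow> real) \<Rightarrow> nat \<Rightarrow> 'a measure" where
  "LA_sigma M MZ Z Y A m = sigma (space M)
     ((\<Union>j\<in>{..m}. gen_by M (Z j) MZ) \<union> (\<Union>j\<in>{..<m}. gen_by M (Y j) borel)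
      \<union> (\<Union>j\<in>{..m}. gen_by M (A j) borel))"

(* E[X | F, B] evaluated at a point x of B: the elementary conditional expectation given
   the sigma-algebra F together with the event B, i.e. E[X 1_B | F] / E[1_B | F]. *)
definition cond_exp_given :: "'a measure \<Rightarrow> 'a measure \<Rightarrow> 'a set \<Rightarrow> ('a \<Rightarrow> real) \<Rightarrow> 'a \<Rightarrow> real" where
  "cond_exp_given M F B X x =
     real_cond_exp M F (\<lambda>y. indicator B y * X y) x / real_cond_exp M F (indicator B) x"

(* Blipped-down outcome H^c_{mk}(gamma); gam j k is the random variable gamma_{jk}(Lbar_j, A_j). *)
definition Hc :: "(nat \<Rightarrow> 'a \<Rightarrow> real) \<Rightarrow> ('a \<Rightarrow> enat) \<Rightarrow> (nat \<Rightarrow> nat \<Rightarrow> 'a \<Rightarrow> real)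
    \<Rightarrow> nat \<Rightarrow> nat \<Rightarrow> 'a \<Rightarrow> real" where
  "Hc Y T gam m k x = (if m < k
      then Y k x - (\<Sum>j\<in>{m..<k}. gam j k x * indicator {y. T y = enat j} x)
      else Y m x)"

(* Pr(1 - A_j | Lbar_j, T >= j) = P(A_j = 1 - a | Lbar_j, T >= j) evaluated at a = A_j *)
definition pr_flip :: "'a measure \<Rightarrow> (nat \<Rightarrow> 'a measure) \<Rightarrow> ('a \<Rightarrow> enat) \<Rightarrow> (nat \<Rightarrow> 'a \<Rightarrow> real)
    \<Rightarrow> nat \<Rightarrow> 'a \<Rightarrow> real" where
  "pr_flip M LS T A j x = cond_exp_given M (LS j) {y \<in> space M. enat j \<le> T y}
      (indicator {y \<in> space M. A j y = 1 - A j x}) x"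

(* Bias-adjusted blipped-down outcome H^{c,a}_{mk}(gamma); cb j k is the random variable c(Lbar_j, k). *)
definition Hca :: "'a measure \<Rightarrow> (nat \<Rightarrow> 'a measure) \<Rightarrow> (nat \<Rightarrow> 'a \<Rightarrow> real) \<Rightarrow> ('a \<Rightarrow> enat)
    \<Rightarrow> (nat \<Rightarrow> 'a \<Rightarrow> real) \<Rightarrow> (nat \<Rightarrow> nat \<Rightarrow> 'a \<Rightarrow> real) \<Rightarrow> (nat \<Rightarrow> nat \<Rightarrow> 'a \<Rightarrow> real)
    \<Rightarrow> nat \<Rightarrow> nat \<Rightarrow> 'a \<Rightarrow> real" where
  "Hca M LS Y T A gam cb m k x = Hc Y T gam m k x
      - (\<Sum>j\<in>{m..k}. pr_flip M LS T A j x * (2 * A j x - 1) * cb j k x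
                        * indicator {y. enat j \<le> T y} x)"

(* True coarse blip gamma*_{jk}(Lbar_j, A_j) = E[Y_k(j,A_j) - Y_k(inf) | T = j, A_j, Lbar_j];
   Ycf j k is the counterfactual Y_k(j,1) (binary treatment: A_T = 1). *)
definition blip_star :: "'a measure \<Rightarrow> (nat \<Rightarrow> 'a measure) \<Rightarrow> ('a \<Rightarrow> enat) \<Rightarrow> (nat \<Rightarrow> 'a \<Rightarrow> real)
    \<Rightarrow> (nat \<Rightarrow> nat \<Rightarrow> 'a \<Rightarrow> real) \<Rightarrow> (nat \<Rightarrow> 'a \<Rightarrow> real) \<Rightarrow> nat \<Rightarrow> nat \<Rightarrow> 'a \<Rightarrow> real" where
  "blip_star M LS T A Ycf Yinf j k x =
     cond_exp_given M (LS j) {y \<in> space M. T y = enat j \<and> A j y = 1} (\<lambda>y. Ycf j k y - Yinf k y) x"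

definition bias_star :: "'a measure \<Rightarrow> (nat \<Rightarrow> 'a measure) \<Rightarrow> ('a \<Rightarrow> enat) \<Rightarrow> (nat \<Rightarrow> 'a \<Rightarrow> real)
    \<Rightarrow> (nat \<Rightarrow> 'a \<Rightarrow> real) \<Rightarrow> nat \<Rightarrow> nat \<Rightarrow> 'a \<Rightarrow> real" where
  "bias_star M LS T A Yinf j k x =
     cond_exp_given M (LS j) {y \<in> space M. enat j \<le> T y \<and> A j y = 1} (\<lambda>y. Yinf k y - Yinf (k - 1) y) x
   - cond_exp_given M (LS j) {y \<in> space M. enat j \<le> T y \<and> A j y = 0} (\<lambda>y. Yinf k y - Yinf (k - 1) y) x"

definition Hc_star :: "'a measure \<Rightarrow> 'b measure \<Rightarrow> nat \<Rightarrow> (nat \<Rightarrow> 'a \<Rightarrow> 'b) \<Rightarrow> (nat \<Rightarrow> 'a \<Rightarrow> real)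
    \<Rightarrow> (nat \<Rightarrow> 'a \<Rightarrow> real) \<Rightarrow> (nat \<Rightarrow> nat \<Rightarrow> 'a \<Rightarrow> real) \<Rightarrow> (nat \<Rightarrow> 'a \<Rightarrow> real)
    \<Rightarrow> nat \<Rightarrow> nat \<Rightarrow> 'a \<Rightarrow> real" where
  "Hc_star M MZ K Z Y A Ycf Yinf m k =
     Hc Y (T_init K A) (blip_star M (L_sigma M MZ Z Y A) (T_init K A) A Ycf Yinf) m k"

definition Hca_star :: "'a measure \<Rightarrow> 'b measure \<Rightarrow> nat \<Rightarrow> (nat \<Rightarrow> 'a \<Rightarrow> 'b) \<Rightarrow> (nat \<Rightarrow> 'a \<Rightarrow> real)
    \<Rightarrow> (nat \<Rightarrow> 'a \<Rightarrow> real) \<Rightarrow> (nat \<Rightarrow> nat \<Rightarrow> 'a \<Rightarrow> real) \<Rightarrow> (nat \<Rightarrow> 'a \<Rightarrow> real)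
    \<Rightarrow> nat \<Rightarrow> nat \<Rightarrow> 'a \<Rightarrow> real" where
  "Hca_star M MZ K Z Y A Ycf Yinf m k =
     Hca M (L_sigma M MZ Z Y A) Y (T_init K A) A
       (blip_star M (L_sigma M MZ Z Y A) (T_init K A) A Ycf Yinf)
       (bias_star M (L_sigma M MZ Z Y A) (T_init K A) A Yinf) m k"

end

theory Submission
  imports Defs
begin

text \<open>Fix \<open>m < k\<close> and write \<open>S = {T \<ge> m}\<close> and \<open>D = Y\<^sub>k(\<infinity>) - Y\<^sub>k\<^sub>-\<^sub>1(\<infinity>)\<close>. On \<open>S\<close> the
  difference \<open>H\<^sup>c\<^sup>a\<^sub>m\<^sub>k - H\<^sup>c\<^sub>m\<^sub>,\<^sub>k\<^sub>-\<^sub>1\<close> equals, almost surely, \<open>V + R\<close>, where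
  \<open>V = \<Sum>\<^sub>a P(A\<^sub>m = a | L\<^sub>m, S) E[D | L\<^sub>m, S, A\<^sub>m = a]\<close> is \<open>L\<^sub>m\<close>-measurable and \<open>R\<close> integrates
  to zero over every \<open>(L\<^sub>m, A\<^sub>m)\<close>-measurable set; hence both conditional expectations equal \<open>V\<close>.
  By coarse consistency, \<open>H\<^sup>c\<^sub>m\<^sub>k - Y\<^sub>k(\<infinity>)\<close> is a sum over \<open>m \<le> i < k\<close> of blip residuals
  \<open>(Y\<^sub>k(i,1) - Y\<^sub>k(\<infinity>) - \<gamma>\<^sup>*\<^sub>i\<^sub>k) 1{T = i}\<close>, each centred given \<open>L\<^sub>i\<close>; the bias correction at a time
  \<open>j > m\<close> is centred given \<open>L\<^sub>j\<close>; and the correction at time \<open>m\<close> turns \<open>D\<close> into \<open>V\<close> plus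
  residuals centred given \<open>L\<^sub>m\<close> within each arm \<open>A\<^sub>m = a\<close>.\<close>

text \<open>For \<open>B \<subseteq> S\<close> this is \<open>P(B | F, S)\<close>.\<close>

definition cond_prob_given :: "'a measure \<Rightarrow> 'a measure \<Rightarrow> 'a set \<Rightarrow> 'a set \<Rightarrow> 'a \<Rightarrow> real" where
  "cond_prob_given M F S B x = real_cond_exp M F (indicator B) x / real_cond_exp M F (indicator S) x"

definition cond_centered :: "'a measure \<Rightarrow> 'a measure \<Rightarrow> ('a \<Rightarrow> real) \<Rightarrow> bool" where
  "cond_centered M F R \<longleftrightarrow> integrable M R \<and> (\<forall>C\<in>sets F. (\<integral>x. indicator C x * R x \<partial>M) = 0)"

lemma cond_centered_subalgebra:
  "cond_centered M G R \<Longrightarrow> sets F \<subseteq> sets G \<Longrightarrow> cond_centered M F R"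
  by (auto simp: cond_centered_def)

context finite_measure_subalgebra
begin

lemma sets_F_subset: "C \<in> sets F \<Longrightarrow> C \<in> sets M"
  using subalg by (auto simp: subalgebra_def)

lemma integrable_indicator_F_mult:
  "C \<in> sets F \<Longrightarrow> integrable M f \<Longrightarrow> integrable M (\<lambda>x. indicator C x * f x :: real)"
  using integrable_mult_indicator[OF sets_F_subset, of C f] by simp

lemma cond_centered_zero: "cond_centered M F (\<lambda>x. 0)"
  by (simp add: cond_centered_def)

lemma cond_centered_add:
  assumes "cond_centered M F R" "cond_centered M F R'"
  shows "cond_centered M F (\<lambda>x. R x + R' x)"
  unfolding cond_centered_def
proof safe
  show "integrable M (\<lambda>x. R x + R' x)" using assms by (simp add: cond_centered_def)
  fix C assume "C \<in> sets F"
  then have "integrable M (\<lambda>x. indicator C x * R x)" "integrable M (\<lambda>x. indicator C x * R' x)"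
    using assms by (auto intro!: integrable_indicator_F_mult simp: cond_centered_def)
  then show "(\<integral>x. indicator C x * (R x + R' x) \<partial>M) = 0"
    using assms \<open>C \<in> sets F\<close> by (simp add: distrib_left cond_centered_def)
qed

lemma cond_centered_uminus: "cond_centered M F R \<Longrightarrow> cond_centered M F (\<lambda>x. - R x)"
  by (simp add: cond_centered_def)

lemma cond_centered_diff:
  "cond_centered M F R \<Longrightarrow> cond_centered M F R' \<Longrightarrow> cond_centered M F (\<lambda>x. R x - R' x)"
  using cond_centered_add[OF _ cond_centered_uminus, of R R'] by simp

lemma cond_centered_sum:
  "(\<And>i. i \<in> I \<Longrightarrow> cond_centered M F (R i)) \<Longrightarrow> cond_centered M F (\<lambda>x. \<Sum>i\<in>I. R i x)"
  by (induction I rule: infinite_finite_induct) (auto intro: cond_centered_add cond_centered_zero)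

lemma real_cond_exp_eq_of_centered_decomposition:
  assumes X: "integrable M X" and V: "integrable M V" "V \<in> borel_measurable F"
    and R: "cond_centered M F R" and XVR: "AE x in M. X x = V x + R x"
  shows "AE x in M. real_cond_exp M F X x = V x"
proof (rule real_cond_exp_charact[OF _ X V])
  fix C assume C: "C \<in> sets F"
  have R_int: "integrable M R" and R0: "(\<integral>x. indicator C x * R x \<partial>M) = 0"
    using R C by (auto simp: cond_centered_def)
  have [measurable]: "C \<in> sets M" "X \<in> borel_measurable M" "V \<in> borel_measurable M" "R \<in> borel_measurable M"
    using sets_F_subset[OF C] X V R_int by auto
  have "(\<integral>x. indicator C x * X x \<partial>M) = (\<integral>x. indicator C x * V x + indicator C x * R x \<partial>M)"
    using XVR by (intro integral_cong_AE) (auto simp: distrib_left)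
  also have "\<dots> = (\<integral>x. indicator C x * V x \<partial>M)"
    using R0 integrable_indicator_F_mult[OF C] V R_int by simp
  finally show "(\<integral>x\<in>C. X x \<partial>M) = (\<integral>x\<in>C. V x \<partial>M)"
    by (simp add: set_lebesgue_integral_def mult.commute)
qed

lemma integrable_indicator_real: "B \<in> sets M \<Longrightarrow> integrable M (indicator B :: 'a \<Rightarrow> real)"
  by (simp add: emeasure_finite less_top[symmetric])

lemma real_cond_exp_indicator_bounds:
  assumes [measurable]: "B \<in> sets M"
  shows "AE x in M. 0 \<le> real_cond_exp M F (indicator B) x \<and> real_cond_exp M F (indicator B) x \<le> 1"
proof -
  have "AE x in M. 0 \<le> real_cond_exp M F (indicator B) x"
    by (rule real_cond_exp_pos) auto
  moreover have "AE x in M. real_cond_exp M F (indicator B) x \<le> real_cond_exp M F (\<lambda>x. 1) x"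
    by (rule real_cond_exp_mono) (auto simp: indicator_def integrable_indicator_real)
  moreover have "AE x in M. real_cond_exp M F (\<lambda>x. 1) x = 1"
    by (rule real_cond_exp_F_meas) auto
  ultimately show ?thesis by eventually_elim auto
qed

lemma real_cond_exp_indicator_mono:
  "B \<in> sets M \<Longrightarrow> S \<in> sets M \<Longrightarrow> B \<subseteq> S \<Longrightarrow>
    AE x in M. real_cond_exp M F (indicator B) x \<le> real_cond_exp M F (indicator S) x"
  by (rule real_cond_exp_mono) (auto simp: indicator_def integrable_indicator_real)

lemma nn_cond_exp_indicator:
  assumes [measurable]: "B \<in> sets M"
  shows "AE x in M. nn_cond_exp M F (\<lambda>x. ennreal (indicator B x)) x
    = ennreal (real_cond_exp M F (indicator B) x)"
proof -
  have "AE x in M. nn_cond_exp M F (\<lambda>x. ennreal (indicator B x)) x \<le> nn_cond_exp M F (\<lambda>x. 1) x"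
    by (rule nn_cond_exp_mono) (auto simp: indicator_def)
  moreover have "AE x in M. 1 = nn_cond_exp M F (\<lambda>x. 1) x"
    by (rule nn_cond_exp_F_meas) simp
  moreover have "AE x in M. 0 = nn_cond_exp M F (\<lambda>x. 0) x"
    by (rule nn_cond_exp_F_meas) simp
  moreover have "(\<lambda>x. ennreal (- indicator B x)) = (\<lambda>x. 0)"
    by (auto simp: indicator_def fun_eq_iff ennreal_neg)
  ultimately show ?thesis
    by (elim eventually_rev_mp)
      (auto intro!: always_eventually simp: real_cond_exp_def ennreal_enn2real_if top_unique)
qed

lemma real_cond_exp_indicator_nonzero:
  assumes [measurable]: "B \<in> sets M"
  shows "AE x in M. x \<in> B \<longrightarrow> real_cond_exp M F (indicator B) x \<noteq> 0"
proof -
  define N where "N = {x\<in>space F. real_cond_exp M F (indicator B) x = 0}"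
  have N: "N \<in> sets F" unfolding N_def by measurable
  then have [measurable]: "N \<in> sets M" by (rule sets_F_subset)
  have "(\<integral>x. indicator N x * indicator B x \<partial>M) = (\<integral>x. indicator N x * real_cond_exp M F (indicator B) x \<partial>M)"
    by (rule real_cond_exp_intg(2)[symmetric])
       (auto intro: integrable_indicator_F_mult[OF N integrable_indicator_real] borel_measurable_indicator N)
  also have "\<dots> = 0" by (intro integral_eq_zero_AE) (simp add: N_def indicator_def)
  finally have "measure M (N \<inter> B) = 0" by (simp add: indicator_inter_arith[symmetric])
  then have "AE x in M. x \<notin> N \<inter> B"
    by (intro AE_not_in) (auto simp: emeasure_eq_measure)
  then show ?thesis
    using subalg sets.sets_into_space[OF assms]
    by (elim eventually_mono) (auto simp: N_def subalgebra_def)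
qed

text \<open>For \<open>F\<close>-measurable \<open>f\<close>, \<open>E[|f| 1\<^sub>B] = E[|f| P(B | F)]\<close>.\<close>

lemma integrable_mult_indicator_of_cond_exp_bound:
  assumes B[measurable]: "B \<in> sets M" and f[measurable]: "f \<in> borel_measurable F"
    and u: "integrable M u"
    and le: "AE x in M. \<bar>f x\<bar> * real_cond_exp M F (indicator B) x \<le> u x"
  shows "integrable M (\<lambda>x. f x * indicator B x)"
proof -
  have [measurable]: "f \<in> borel_measurable M" by (rule measurable_from_subalg[OF subalg f])
  have "(\<integral>\<^sup>+x. ennreal (norm (f x * indicator B x)) \<partial>M) = (\<integral>\<^sup>+x. ennreal \<bar>f x\<bar> * ennreal (indicator B x) \<partial>M)"
    by (intro nn_integral_cong) (auto simp: indicator_def)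
  also have "\<dots> = (\<integral>\<^sup>+x. ennreal \<bar>f x\<bar> * nn_cond_exp M F (\<lambda>x. ennreal (indicator B x)) x \<partial>M)"
    by (rule nn_cond_exp_intg[symmetric]) auto
  also have "\<dots> = (\<integral>\<^sup>+x. ennreal (\<bar>f x\<bar> * real_cond_exp M F (indicator B) x) \<partial>M)"
    using nn_cond_exp_indicator[OF B] by (intro nn_integral_cong_AE) (auto simp: ennreal_mult')
  also have "\<dots> \<le> (\<integral>\<^sup>+x. ennreal (norm (u x)) \<partial>M)"
    using le by (intro nn_integral_mono_AE) (auto intro: ennreal_leI)
  also have "\<dots> < \<infinity>" using u by (simp add: integrable_iff_bounded)
  finally show ?thesis by (intro integrableI_bounded) auto
qed

lemma integrable_cond_exp_given_mult_indicator:
  assumes [measurable]: "B \<in> sets M" and U: "integrable M U"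
  shows "integrable M (\<lambda>x. cond_exp_given M F B U x * indicator B x)"
proof -
  have BU: "integrable M (\<lambda>y. indicator B y * U y)"
    using integrable_mult_indicator[of B M U] U by simp
  show ?thesis
    unfolding cond_exp_given_def
  proof (rule integrable_mult_indicator_of_cond_exp_bound)
    show "integrable M (\<lambda>x. \<bar>real_cond_exp M F (\<lambda>y. indicator B y * U y) x\<bar>)"
      by (intro integrable_abs real_cond_exp_int(1) BU)
    have "\<bar>a / c\<bar> * c \<le> \<bar>a\<bar>" for a c :: real
      by (cases "c \<le> 0") (auto simp: abs_divide mult_nonneg_nonpos intro: order_trans[of _ 0])
    then show "AE x in M. \<bar>real_cond_exp M F (\<lambda>y. indicator B y * U y) x / real_cond_exp M F (indicator B) x\<bar>
        * real_cond_exp M F (indicator B) x \<le> \<bar>real_cond_exp M F (\<lambda>y. indicator B y * U y) x\<bar>"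
      by blast
  qed auto
qed

text \<open>Multiplying \<open>E[1\<^sub>B U | F] / P(B | F)\<close> back by \<open>P(B | F)\<close> loses the set where \<open>P(B | F) = 0\<close>;
  but \<open>B\<close> is a null set there.\<close>

lemma cond_centered_residual:
  assumes B[measurable]: "B \<in> sets M" and U: "integrable M U"
  shows "cond_centered M F (\<lambda>x. (U x - cond_exp_given M F B U x) * indicator B x)"
  unfolding cond_centered_def
proof safe
  define u where "u = real_cond_exp M F (\<lambda>y. indicator B y * U y)"
  define b where "b = real_cond_exp M F (indicator B)"
  have cond_exp: "cond_exp_given M F B U x = u x / b x" for x
    by (simp add: cond_exp_given_def u_def b_def)
  have BU: "integrable M (\<lambda>y. indicator B y * U y)"
    using integrable_mult_indicator[OF B U] by simp
  have uB: "integrable M (\<lambda>x. u x / b x * indicator B x)"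
    using integrable_cond_exp_given_mult_indicator[OF B U] by (simp add: cond_exp)
  show "integrable M (\<lambda>x. (U x - cond_exp_given M F B U x) * indicator B x)"
    using Bochner_Integration.integrable_diff[OF BU uB] by (simp add: cond_exp algebra_simps)
  fix C assume C: "C \<in> sets F"
  define N where "N = {x\<in>space F. b x = 0}"
  have [measurable]: "u \<in> borel_measurable F" "b \<in> borel_measurable F" "C \<in> sets F"
    using C by (simp_all add: u_def b_def)
  have CN: "C \<inter> N \<in> sets F" unfolding N_def by measurable
  have u: "integrable M u" unfolding u_def by (rule real_cond_exp_int(1)[OF BU])
  have "C \<subseteq> space F" using C by (rule sets.sets_into_space)
  then have split: "indicator C x * (u x / b x) * b x = indicator C x * u x - indicator (C \<inter> N) x * u x" for x
    by (auto simp: indicator_def N_def)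
  have "(\<integral>x. indicator C x * (indicator B x * U x) \<partial>M) = (\<integral>x. indicator C x * u x \<partial>M)"
    unfolding u_def
    by (rule real_cond_exp_intg(2)[symmetric])
      (auto intro: integrable_indicator_F_mult[OF C BU] borel_measurable_integrable[OF BU])
  moreover have "(\<integral>x. indicator C x * (u x / b x) * indicator B x \<partial>M)
      = (\<integral>x. indicator C x * (u x / b x) * b x \<partial>M)"
    unfolding b_def
    by (rule real_cond_exp_intg(2)[symmetric])
      (use integrable_indicator_F_mult[OF C uB] in \<open>auto simp: ac_simps b_def\<close>)
  moreover have "(\<integral>x. indicator C x * (u x / b x) * b x \<partial>M)
      = (\<integral>x. indicator C x * u x \<partial>M) - (\<integral>x. indicator (C \<inter> N) x * u x \<partial>M)"
    unfolding split
    by (rule Bochner_Integration.integral_diff)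
      (use integrable_indicator_F_mult[OF C u] integrable_indicator_F_mult[OF CN u] in auto)
  moreover have "(\<integral>x. indicator (C \<inter> N) x * u x \<partial>M) = (\<integral>x. indicator (C \<inter> N) x * (indicator B x * U x) \<partial>M)"
    unfolding u_def
    by (rule real_cond_exp_intg(2))
      (auto intro: integrable_indicator_F_mult[OF CN BU] borel_measurable_integrable[OF BU]
        borel_measurable_indicator[OF CN])
  moreover have "(\<integral>x. indicator (C \<inter> N) x * (indicator B x * U x) \<partial>M) = 0"
    using real_cond_exp_indicator_nonzero[OF B]
    by (intro integral_eq_zero_AE) (auto elim!: eventually_mono simp: indicator_def N_def b_def)
  moreover have "(\<integral>x. indicator C x * ((U x - cond_exp_given M F B U x) * indicator B x) \<partial>M)
      = (\<integral>x. indicator C x * (indicator B x * U x) \<partial>M) - (\<integral>x. indicator C x * (u x / b x) * indicator B x \<partial>M)"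
    using integrable_indicator_F_mult[OF C BU] integrable_indicator_F_mult[OF C uB]
    by (subst Bochner_Integration.integral_diff[symmetric]) (auto simp: cond_exp algebra_simps)
  ultimately show "(\<integral>x. indicator C x * ((U x - cond_exp_given M F B U x) * indicator B x) \<partial>M) = 0"
    by linarith
qed

lemma integrable_cond_prob_cond_exp_given_indicator:
  assumes B[measurable]: "B \<in> sets M" and B'[measurable]: "B' \<in> sets M"
    and B''[measurable]: "B'' \<in> sets M" and S[measurable]: "S \<in> sets M"
    and "B \<subseteq> S" "B'' \<subseteq> S" and "B' = B \<or> B' = B''" and U: "integrable M U"
  shows "integrable M (\<lambda>x. cond_prob_given M F S B x * cond_exp_given M F B' U x * indicator B'' x)"
proof -
  let ?P = "\<lambda>E. real_cond_exp M F (indicator E)"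
  let ?u = "real_cond_exp M F (\<lambda>y. indicator B' y * U y)"
  have bound: "AE x in M. \<bar>?P B x / ?P S x * (?u x / ?P B' x)\<bar> * ?P B'' x \<le> \<bar>?u x\<bar>"
    using \<open>B' = B \<or> B' = B''\<close>
  proof
    assume B'_eq: "B' = B''"
    have "\<bar>p / s * (u / p')\<bar> * p' \<le> \<bar>u\<bar>" if "0 \<le> p" "p \<le> s" "0 \<le> p'" for p s p' u :: real
    proof -
      have "\<bar>p / s\<bar> \<le> 1" using that by (cases "s = 0") (auto simp: abs_divide divide_le_eq_1)
      have "\<bar>p / s * (u / p')\<bar> * p' = \<bar>p / s\<bar> * (\<bar>u / p'\<bar> * p')" by (simp add: abs_mult)
      also have "\<dots> \<le> 1 * (\<bar>u / p'\<bar> * p')"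
        using \<open>\<bar>p / s\<bar> \<le> 1\<close> that by (intro mult_right_mono) auto
      also have "\<dots> \<le> \<bar>u\<bar>" using that by (cases "p' = 0") (auto simp: abs_divide)
      finally show ?thesis .
    qed
    then show ?thesis
      using real_cond_exp_indicator_bounds[OF B] real_cond_exp_indicator_bounds[OF B']
        real_cond_exp_indicator_mono[OF B S \<open>B \<subseteq> S\<close>] unfolding B'_eq
      by (elim eventually_rev_mp) (auto intro!: always_eventually)
  next
    assume B'_eq: "B' = B"
    have "\<bar>p / s * (u / p)\<bar> * p'' \<le> \<bar>u\<bar>" if "0 \<le> p''" "p'' \<le> s" for p s p'' u :: real
    proof (cases "p = 0 \<or> s = 0")
      case False
      then have "\<bar>p / s * (u / p)\<bar> * p'' = \<bar>u / s\<bar> * p''" by simp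
      also have "\<dots> \<le> \<bar>u / s\<bar> * s" using that by (intro mult_left_mono) auto
      also have "\<dots> = \<bar>u\<bar>" using False that by (simp add: abs_divide)
      finally show ?thesis .
    qed auto
    then show ?thesis
      using real_cond_exp_indicator_bounds[OF B''] real_cond_exp_indicator_mono[OF B'' S \<open>B'' \<subseteq> S\<close>]
      unfolding B'_eq by (elim eventually_rev_mp) (auto intro!: always_eventually)
  qed
  have "integrable M (\<lambda>y. indicator B' y * U y)"
    using integrable_mult_indicator[of B' M U] U by simp
  then show ?thesis
    unfolding cond_prob_given_def cond_exp_given_def
    by (intro integrable_mult_indicator_of_cond_exp_bound[OF _ _ _ bound] integrable_abs
        real_cond_exp_int(1)) auto
qed

text \<open>The two terms balance because \<open>P(B\<^sub>0 | F, S) P(B\<^sub>1 | F) = P(B\<^sub>1 | F, S) P(B\<^sub>0 | F)\<close>.\<close>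

lemma cond_centered_flip:
  assumes [measurable]: "B0 \<in> sets M" "B1 \<in> sets M" "c \<in> borel_measurable F"
    and int1: "integrable M (\<lambda>x. cond_prob_given M F S B0 x * c x * indicator B1 x)"
    and int0: "integrable M (\<lambda>x. cond_prob_given M F S B1 x * c x * indicator B0 x)"
  shows "cond_centered M F (\<lambda>x. cond_prob_given M F S B0 x * c x * indicator B1 x
      - cond_prob_given M F S B1 x * c x * indicator B0 x)"
  unfolding cond_centered_def
proof safe
  show "integrable M (\<lambda>x. cond_prob_given M F S B0 x * c x * indicator B1 x
      - cond_prob_given M F S B1 x * c x * indicator B0 x)"
    by (rule Bochner_Integration.integrable_diff[OF int1 int0])
  fix C assume C[measurable]: "C \<in> sets F"
  define f where "f B x = indicator C x * cond_prob_given M F S B x * c x" for B x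
  have [measurable]: "f B \<in> borel_measurable F" for B
    unfolding f_def cond_prob_given_def by measurable
  have f: "integrable M (\<lambda>x. f B0 x * indicator B1 x)" "integrable M (\<lambda>x. f B1 x * indicator B0 x)"
    using integrable_indicator_F_mult[OF C int1] integrable_indicator_F_mult[OF C int0]
    by (simp_all add: f_def ac_simps)
  have "(\<integral>x. indicator C x * (cond_prob_given M F S B0 x * c x * indicator B1 x
      - cond_prob_given M F S B1 x * c x * indicator B0 x) \<partial>M)
    = (\<integral>x. f B0 x * indicator B1 x \<partial>M) - (\<integral>x. f B1 x * indicator B0 x \<partial>M)"
    using f by (subst Bochner_Integration.integral_diff[symmetric]) (auto simp: f_def algebra_simps)
  also have "\<dots> = (\<integral>x. f B0 x * real_cond_exp M F (indicator B1) x \<partial>M)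
      - (\<integral>x. f B1 x * real_cond_exp M F (indicator B0) x \<partial>M)"
    using real_cond_exp_intg(2)[OF f(1)] real_cond_exp_intg(2)[OF f(2)] by simp
  also have "\<dots> = 0"
    by (simp add: f_def cond_prob_given_def ac_simps)
  finally show "(\<integral>x. indicator C x * (cond_prob_given M F S B0 x * c x * indicator B1 x
      - cond_prob_given M F S B1 x * c x * indicator B0 x) \<partial>M) = 0" .
qed

lemma cond_prob_given_partition:
  assumes [measurable]: "B0 \<in> sets M" "B1 \<in> sets M" "S \<in> sets F"
    and "B0 \<inter> B1 = {}" "B0 \<union> B1 = S"
  shows "AE x in M. x \<in> S \<longrightarrow> cond_prob_given M F S B0 x + cond_prob_given M F S B1 x = 1"
proof -
  have "(\<lambda>x. indicator B0 x + indicator B1 x) = (indicator S :: 'a \<Rightarrow> real)"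
    using assms(4,5) by (auto simp: fun_eq_iff indicator_def)
  moreover have "AE x in M. real_cond_exp M F (\<lambda>x. indicator B0 x + indicator B1 x) x
      = real_cond_exp M F (indicator B0) x + real_cond_exp M F (indicator B1) x"
    by (rule real_cond_exp_add) (auto intro: integrable_indicator_real)
  moreover have "AE x in M. real_cond_exp M F (indicator S) x = indicator S x"
    by (rule real_cond_exp_F_meas) (simp_all add: integrable_indicator_real sets_F_subset)
  ultimately show ?thesis
    by (elim eventually_rev_mp)
      (auto intro!: always_eventually simp: cond_prob_given_def add_divide_distrib[symmetric])
qed

end

lemma enat_le_T_init_iff:
  assumes "j \<le> K"
  shows "enat j \<le> T_init K A x \<longleftrightarrow> (\<forall>i<j. A i x = 0)"
proof (cases "\<exists>m\<le>K. A m x \<noteq> 0")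
  case True
  define t where "t = (LEAST m. A m x \<noteq> 0)"
  have "T_init K A x = enat t" using True by (simp add: T_init_def t_def)
  moreover have "A t x \<noteq> 0" using True LeastI_ex[of "\<lambda>m. A m x \<noteq> 0"] by (auto simp: t_def)
  moreover have "A i x = 0" if "i < t" for i using not_less_Least that by (auto simp: t_def)
  ultimately show ?thesis by (auto simp: not_less[symmetric])
next
  case False
  then show ?thesis using assms by (auto simp: T_init_def)
qed

lemma T_init_eq_enat_iff:
  assumes "j \<le> K"
  shows "T_init K A x = enat j \<longleftrightarrow> (\<forall>i<j. A i x = 0) \<and> A j x \<noteq> 0"
proof
  assume T: "T_init K A x = enat j"
  then have ex: "\<exists>m\<le>K. A m x \<noteq> 0" and j: "j = (LEAST m. A m x \<noteq> 0)"
    by (auto simp: T_init_def split: if_splits)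
  show "(\<forall>i<j. A i x = 0) \<and> A j x \<noteq> 0"
    unfolding j using ex LeastI_ex[of "\<lambda>m. A m x \<noteq> 0"] not_less_Least[of _ "\<lambda>m. A m x \<noteq> 0"] by blast
next
  assume first: "(\<forall>i<j. A i x = 0) \<and> A j x \<noteq> 0"
  then have "(LEAST m. A m x \<noteq> 0) = j"
    by (intro Least_equality) (auto simp: not_less[symmetric])
  then show "T_init K A x = enat j" using first assms by (auto simp: T_init_def)
qed

lemma T_init_less_enatD:
  assumes "T_init K A x < enat l"
  obtains t where "T_init K A x = enat t" "t < l" "t \<le> K"
proof -
  have ex: "\<exists>m\<le>K. A m x \<noteq> 0" using assms by (auto simp: T_init_def split: if_splits)
  then have "(LEAST m. A m x \<noteq> 0) \<le> K" by (meson Least_le order_trans)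
  with assms ex that show ?thesis by (auto simp: T_init_def)
qed

lemma sigma_sets_gen_by_level_set:
  assumes "G \<in> sigma_sets (space M) (E \<union> gen_by M f N)" and "E \<subseteq> sets F" and "space F = space M"
  shows "\<exists>C\<in>sets F. G \<inter> {x\<in>space M. f x = a} = C \<inter> {x\<in>space M. f x = a}"
  using assms(1)
proof induction
  case (Basic G)
  then consider "G \<in> sets F" | B where "G = f -` B \<inter> space M"
    using assms(2) by (auto simp: gen_by_def)
  then show ?case
  proof cases
    case (2 B)
    show ?thesis
    proof (cases "a \<in> B")
      case True
      then show ?thesis using 2 assms(3) sets.top[of F] by (intro bexI[of _ "space F"]) auto
    next
      case False
      then show ?thesis using 2 by (intro bexI[of _ "{}"]) auto
    qed
  qed blast
next
  case Empty
  then show ?case by (auto intro!: bexI[of _ "{}"])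
next
  case (Compl G)
  then obtain C where "C \<in> sets F" "G \<inter> {x\<in>space M. f x = a} = C \<inter> {x\<in>space M. f x = a}" by blast
  then show ?case
    using assms(3) sets.compl_sets[of C F] by (intro bexI[of _ "space F - C"]) auto
next
  case (Union G)
  let ?V = "{x\<in>space M. f x = a}"
  from Union have "\<forall>i. \<exists>C. C \<in> sets F \<and> G i \<inter> ?V = C \<inter> ?V" by blast
  from choice[OF this] obtain C where C: "\<And>i. C i \<in> sets F" "\<And>i. G i \<inter> ?V = C i \<inter> ?V"
    by blast
  have "(\<Union>i. G i) \<inter> ?V = (\<Union>i. G i \<inter> ?V)" by blast
  also have "\<dots> = (\<Union>i. C i) \<inter> ?V" unfolding C(2) by blast
  finally show ?case using C(1) by (intro bexI[of _ "\<Union>i. C i"]) auto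
qed

locale treatment_initiation =
  fixes M :: "'a measure" and MZ :: "'b measure" and K :: nat
    and Z :: "nat \<Rightarrow> 'a \<Rightarrow> 'b"
    and Y A Yinf :: "nat \<Rightarrow> 'a \<Rightarrow> real"
    and Ycf :: "nat \<Rightarrow> nat \<Rightarrow> 'a \<Rightarrow> real"
  assumes prob: "prob_space M"
    and Z_meas: "\<And>j. j \<le> K \<Longrightarrow> Z j \<in> M \<rightarrow>\<^sub>M MZ"
    and Y_int: "\<And>j. j \<le> K \<Longrightarrow> integrable M (Y j)"
    and A_meas: "\<And>j. j \<le> K \<Longrightarrow> A j \<in> borel_measurable M"
    and Yinf_int: "\<And>j. j \<le> K \<Longrightarrow> integrable M (Yinf j)"
    and Ycf_int: "\<And>j l. j \<le> K \<Longrightarrow> l \<le> K \<Longrightarrow> integrable M (Ycf j l)"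
    and binary: "\<And>j x. j \<le> K \<Longrightarrow> x \<in> space M \<Longrightarrow> A j x = 0 \<or> A j x = 1"
    and consistency: "AE x in M. \<forall>l\<le>K.
        (T_init K A x < enat l \<longrightarrow> Y l x = Ycf (the_enat (T_init K A x)) l x)
      \<and> (enat l \<le> T_init K A x \<longrightarrow> Y l x = Yinf l x)"
begin

abbreviation "T \<equiv> T_init K A"
abbreviation "L \<equiv> L_sigma M MZ Z Y A"
abbreviation "LA \<equiv> LA_sigma M MZ Z Y A"
abbreviation "at_risk j \<equiv> {y \<in> space M. enat j \<le> T y}"
abbreviation "arm j a \<equiv> {y \<in> space M. enat j \<le> T y \<and> A j y = a}"

definition L_generators :: "nat \<Rightarrow> 'a set set" where
  "L_generators j = (\<Union>i\<in>{..j}. gen_by M (Z i) MZ) \<union> (\<Union>i\<in>{..<j}. gen_by M (Y i) borel)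
  \<union> (\<Union>i\<in>{..<j}. gen_by M (A i) borel)"

lemma LA_generators_eq: "(\<Union>i\<in>{..j}. gen_by M (Z i) MZ) \<union> (\<Union>i\<in>{..<j}. gen_by M (Y i) borel)
  \<union> (\<Union>i\<in>{..j}. gen_by M (A i) borel) = L_generators j \<union> gen_by M (A j) borel"
  by (auto simp: L_generators_def le_less)

lemma L_generators_subset: "j \<le> K \<Longrightarrow> L_generators j \<union> gen_by M (A j) borel \<subseteq> sets M"
  unfolding L_generators_def gen_by_def
  by (auto intro!: measurable_sets Z_meas A_meas borel_measurable_integrable Y_int)

lemma space_L: "space (L j) = space M" and space_LA: "space (LA j) = space M"
  unfolding L_sigma_def LA_sigma_def by (simp_all add: space_measure_of_conv)

lemma sets_L: "sets (L j) = sigma_sets (space M) (L_generators j)"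
  unfolding L_sigma_def L_generators_def[symmetric]
  by (rule sets_measure_of) (auto simp: L_generators_def gen_by_def)

lemma sets_LA: "sets (LA j) = sigma_sets (space M) (L_generators j \<union> gen_by M (A j) borel)"
  unfolding LA_sigma_def LA_generators_eq
  by (rule sets_measure_of) (auto simp: L_generators_def gen_by_def)

lemma sets_L_subset_LA: "sets (L j) \<subseteq> sets (LA j)"
  unfolding sets_L sets_LA by (rule sigma_sets_mono') auto

lemma sets_LA_subset_L: "j < i \<Longrightarrow> sets (LA j) \<subseteq> sets (L i)"
  unfolding sets_L sets_LA by (rule sigma_sets_mono') (auto simp: L_generators_def)

lemma subalgebra_LA: "j \<le> K \<Longrightarrow> subalgebra M (LA j)"
  using L_generators_subset by (simp add: subalgebra_def sets_LA space_LA sets.sigma_sets_subset)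

lemma subalgebra_L: "j \<le> K \<Longrightarrow> subalgebra M (L j)"
  using subalgebra_LA[of j] sets_L_subset_LA[of j] by (auto simp: subalgebra_def space_L)

lemma finite_measure_subalgebra_L: "j \<le> K \<Longrightarrow> finite_measure_subalgebra M (L j)"
  and finite_measure_subalgebra_LA: "j \<le> K \<Longrightarrow> finite_measure_subalgebra M (LA j)"
  using subalgebra_L subalgebra_LA prob_space.finite_measure[OF prob]
  by (auto simp: finite_measure_subalgebra_def finite_measure_subalgebra_axioms_def)

lemma A_measurable_L: "i < j \<Longrightarrow> A i \<in> borel_measurable (L j)"
proof (rule measurableI)
  fix B :: "real set" assume "i < j" "B \<in> sets borel"
  then have "A i -` B \<inter> space M \<in> L_generators j" unfolding L_generators_def gen_by_def by blast
  then show "A i -` B \<inter> space (L j) \<in> sets (L j)" unfolding sets_L space_L by auto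
qed auto

lemma at_risk_L:
  assumes "j \<le> K" shows "at_risk j \<in> sets (L j)"
proof -
  have "{y \<in> space (L j). \<forall>i\<in>{..<j}. A i y = 0} \<in> sets (L j)"
  proof (rule sets.sets_Collect_countable_All')
    fix i assume "i \<in> {..<j}"
    then have [measurable]: "A i \<in> borel_measurable (L j)" by (simp add: A_measurable_L)
    show "{y \<in> space (L j). A i y = 0} \<in> sets (L j)" by measurable
  qed auto
  moreover have "at_risk j = {y \<in> space (L j). \<forall>i\<in>{..<j}. A i y = 0}"
    using enat_le_T_init_iff[OF assms, of A] by (auto simp: space_L)
  ultimately show ?thesis by simp
qed

lemma at_risk_measurable: "j \<le> K \<Longrightarrow> at_risk j \<in> sets M"
  using at_risk_L subalgebra_L by (auto simp: subalgebra_def)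

lemma arm_measurable:
  assumes "j \<le> K" shows "arm j a \<in> sets M"
proof -
  have [measurable]: "A j \<in> borel_measurable M" "at_risk j \<in> sets M"
    using A_meas at_risk_measurable assms by auto
  have "arm j a = at_risk j \<inter> {y\<in>space M. A j y = a}" by auto
  also have "\<dots> \<in> sets M" by measurable
  finally show ?thesis .
qed

lemma T_eq_enat_eq_arm:
  assumes "j \<le> K" shows "{y \<in> space M. T y = enat j} = arm j 1"
proof -
  have "T y = enat j \<longleftrightarrow> enat j \<le> T y \<and> A j y \<noteq> 0" for y
    using enat_le_T_init_iff[OF assms, of A y] T_init_eq_enat_iff[OF assms, of A y] by auto
  then show ?thesis using binary[OF assms] by auto
qed

lemma cond_centered_LA_of_L:
  assumes "m \<le> K" and R: "cond_centered M (L m) R" and vanish: "\<And>x. x \<in> space M \<Longrightarrow> A m x \<noteq> a \<Longrightarrow> R x = 0"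
  shows "cond_centered M (LA m) R"
  unfolding cond_centered_def
proof safe
  show "integrable M R" using R by (simp add: cond_centered_def)
  fix G assume "G \<in> sets (LA m)"
  then obtain C where C: "C \<in> sets (L m)" "G \<inter> {x\<in>space M. A m x = a} = C \<inter> {x\<in>space M. A m x = a}"
    using sigma_sets_gen_by_level_set[of G M "L_generators m" "A m" borel "L m" a]
    by (auto simp: sets_LA sets_L space_L)
  have "indicator G x * R x = indicator C x * R x" if "x \<in> space M" for x
    using C(2) vanish[OF that] that by (cases "A m x = a") (auto simp: indicator_def)
  then have "(\<integral>x. indicator G x * R x \<partial>M) = (\<integral>x. indicator C x * R x \<partial>M)"
    by (rule Bochner_Integration.integral_cong[OF refl])
  then show "(\<integral>x. indicator G x * R x \<partial>M) = 0" using R C(1) by (simp add: cond_centered_def)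
qed

abbreviation "gamma \<equiv> blip_star M L T A Ycf Yinf"
abbreviation "bias \<equiv> bias_star M L T A Yinf"
abbreviation "arm_prob j a \<equiv> cond_prob_given M (L j) (at_risk j) (arm j a)"
abbreviation "arm_mean j a k \<equiv> cond_exp_given M (L j) (arm j a) (\<lambda>y. Yinf k y - Yinf (k - 1) y)"

lemma indicator_arm_1:
  "i \<le> K \<Longrightarrow> x \<in> space M \<Longrightarrow> indicator (arm i 1) x = (if T x = enat i then 1 else 0 :: real)"
  using T_eq_enat_eq_arm[of i] by (auto simp: indicator_def set_eq_iff)

lemma blip_star_eq:
  "i \<le> K \<Longrightarrow> gamma i l = cond_exp_given M (L i) (arm i 1) (\<lambda>y. Ycf i l y - Yinf l y)"
  using T_eq_enat_eq_arm[of i] unfolding blip_star_def[abs_def]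
  by (simp add: Collect_conj_eq[symmetric] set_eq_iff) (metis (lifting))

definition blip_residual :: "nat \<Rightarrow> nat \<Rightarrow> 'a \<Rightarrow> real" where
  "blip_residual i l x = (Ycf i l x - Yinf l x - gamma i l x) * indicator (arm i 1) x"

definition bias_term :: "nat \<Rightarrow> nat \<Rightarrow> 'a \<Rightarrow> real" where
  "bias_term j k x = arm_prob j 0 x * bias j k x * indicator (arm j 1) x
    - arm_prob j 1 x * bias j k x * indicator (arm j 0) x"

lemma Hc_eq_sum_arm:
  assumes "x \<in> space M" "l \<le> K"
  shows "Hc Y T gamma n l x
    = (if n < l then Y l x - (\<Sum>i\<in>{n..<l}. gamma i l x * indicator (arm i 1) x) else Y n x)"
proof -
  have "(\<Sum>i\<in>{n..<l}. gamma i l x * indicator {y. T y = enat i} x)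
      = (\<Sum>i\<in>{n..<l}. gamma i l x * indicator (arm i 1) x)"
    using assms by (intro sum.cong refl) (simp add: indicator_arm_1)
  then show ?thesis by (simp add: Hc_def)
qed

lemma Hc_blip_decomposition:
  assumes "n \<le> l" "l \<le> K"
  shows "AE x in M. x \<in> at_risk n \<longrightarrow> Hc Y T gamma n l x = Yinf l x + (\<Sum>i\<in>{n..<l}. blip_residual i l x)"
  using consistency
proof (rule eventually_mono, safe)
  fix x assume x: "x \<in> space M" "enat n \<le> T x" and cons: "\<forall>l\<le>K.
        (T x < enat l \<longrightarrow> Y l x = Ycf (the_enat (T x)) l x) \<and> (enat l \<le> T x \<longrightarrow> Y l x = Yinf l x)"
  have jump: "(\<Sum>i\<in>{n..<l}. (Ycf i l x - Yinf l x) * indicator (arm i 1) x) = Y l x - Yinf l x"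
  proof (cases "T x < enat l")
    case True
    then obtain t where t: "T x = enat t" "t < l" "t \<le> K" by (rule T_init_less_enatD)
    have "(\<Sum>i\<in>{n..<l}. (Ycf i l x - Yinf l x) * indicator (arm i 1) x)
        = (\<Sum>i\<in>{n..<l}. if i = t then Ycf i l x - Yinf l x else 0)"
      using assms x t by (intro sum.cong refl) (simp add: indicator_arm_1)
    also have "\<dots> = Y l x - Yinf l x" using cons assms x t by simp
    finally show ?thesis .
  next
    case False
    then show ?thesis using cons assms x by (auto simp: indicator_arm_1 not_less intro!: sum.neutral)
  qed
  show "Hc Y T gamma n l x = Yinf l x + (\<Sum>i\<in>{n..<l}. blip_residual i l x)"
  proof (cases "n < l")
    case True
    then show ?thesis
      using jump x assms
      by (simp add: Hc_eq_sum_arm blip_residual_def algebra_simps sum_subtractf sum.distrib)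
  next
    case False
    then show ?thesis using cons x assms by (simp add: Hc_def)
  qed
qed

lemma pr_flip_eq_bias_term:
  assumes "j \<le> K" "x \<in> space M"
  shows "pr_flip M L T A j x * (2 * A j x - 1) * bias j k x * indicator {y. enat j \<le> T y} x = bias_term j k x"
proof -
  have "(\<lambda>y. indicator (at_risk j) y * indicator {y \<in> space M. A j y = a} y)
      = (indicator (arm j a) :: 'a \<Rightarrow> real)" for a
    by (auto simp: indicator_def fun_eq_iff)
  then have "pr_flip M L T A j x = cond_prob_given M (L j) (at_risk j) (arm j (1 - A j x)) x"
    by (simp add: pr_flip_def cond_exp_given_def cond_prob_given_def)
  then show ?thesis
    using binary[OF assms] assms(2) by (auto simp: bias_term_def indicator_def)
qed

lemma cond_centered_blip_residual:
  assumes "i \<le> K" "l \<le> K"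
  shows "cond_centered M (L i) (blip_residual i l)"
proof -
  interpret finite_measure_subalgebra M "L i" by (rule finite_measure_subalgebra_L[OF assms(1)])
  have "integrable M (\<lambda>y. Ycf i l y - Yinf l y)" using assms by (simp add: Ycf_int Yinf_int)
  from cond_centered_residual[OF arm_measurable[OF assms(1)] this]
  show ?thesis by (simp add: blip_residual_def[abs_def] blip_star_eq assms)
qed

lemma integrable_arm_prob_arm_mean:
  assumes "j \<le> K" "k \<le> K" "b = a \<or> b = c"
  shows "integrable M (\<lambda>x. arm_prob j a x * arm_mean j b k x * indicator (arm j c) x)"
proof -
  interpret finite_measure_subalgebra M "L j" by (rule finite_measure_subalgebra_L[OF assms(1)])
  show ?thesis
    using assms by (intro integrable_cond_prob_cond_exp_given_indicator arm_measurable at_risk_measurable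
      Bochner_Integration.integrable_diff Yinf_int) auto
qed

lemma cond_centered_bias_term:
  assumes "j \<le> K" "k \<le> K"
  shows "cond_centered M (L j) (bias_term j k)"
proof -
  interpret finite_measure_subalgebra M "L j" by (rule finite_measure_subalgebra_L[OF assms(1)])
  have "integrable M (\<lambda>x. arm_prob j a x * bias j k x * indicator (arm j (1 - a)) x)"
    if "a = 0 \<or> a = 1" for a :: real
    unfolding bias_star_def right_diff_distrib left_diff_distrib
    using assms that by (intro Bochner_Integration.integrable_diff integrable_arm_prob_arm_mean) auto
  from this[of 0] this[of 1] show ?thesis
    unfolding bias_term_def[abs_def]
    by (intro cond_centered_flip arm_measurable assms(1)) (auto simp: bias_star_def cond_exp_given_def)
qed

abbreviation "contrast m k \<equiv>
  \<lambda>x. Hca_star M MZ K Z Y A Ycf Yinf m k x - Hc_star M MZ K Z Y A Ycf Yinf m (k - 1) x"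

definition pooled_increment :: "nat \<Rightarrow> nat \<Rightarrow> 'a \<Rightarrow> real" where
  "pooled_increment m k x
    = indicator (at_risk m) x * (arm_prob m 1 x * arm_mean m 1 k x + arm_prob m 0 x * arm_mean m 0 k x)"

definition arm_residual :: "nat \<Rightarrow> nat \<Rightarrow> real \<Rightarrow> 'a \<Rightarrow> real" where
  "arm_residual m k a x = (Yinf k x - Yinf (k - 1) x - arm_mean m a k x) * indicator (arm m a) x"

definition contrast_residual :: "nat \<Rightarrow> nat \<Rightarrow> 'a \<Rightarrow> real" where
  "contrast_residual m k x = (\<Sum>i\<in>{m..<k}. blip_residual i k x) - (\<Sum>i\<in>{m..<k - 1}. blip_residual i (k - 1) x)
    - (\<Sum>j\<in>{m<..k}. bias_term j k x) + arm_residual m k 1 x + arm_residual m k 0 x"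

lemma contrast_eq:
  assumes "x \<in> space M" "k \<le> K"
  shows "contrast m k x = Hc Y T gamma m k x - (\<Sum>j\<in>{m..k}. bias_term j k x) - Hc Y T gamma m (k - 1) x"
proof -
  have "(\<Sum>j\<in>{m..k}. pr_flip M L T A j x * (2 * A j x - 1) * bias j k x * indicator {y. enat j \<le> T y} x)
      = (\<Sum>j\<in>{m..k}. bias_term j k x)"
    using assms by (intro sum.cong refl pr_flip_eq_bias_term) auto
  then show ?thesis by (simp add: Hca_star_def Hc_star_def Hca_def)
qed

lemma contrast_decomposition:
  assumes "m < k" "k \<le> K"
  shows "AE x in M. indicator (at_risk m) x * contrast m k x = pooled_increment m k x + contrast_residual m k x"
proof -
  interpret finite_measure_subalgebra M "L m" by (rule finite_measure_subalgebra_L) (use assms in auto)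
  have "arm m 0 \<inter> arm m 1 = {}" "arm m 0 \<union> arm m 1 = at_risk m"
    using binary[of m] assms by auto
  then have "AE x in M. x \<in> at_risk m \<longrightarrow> arm_prob m 0 x + arm_prob m 1 x = 1"
    using assms by (intro cond_prob_given_partition arm_measurable at_risk_L) auto
  moreover have "AE x in M. x \<in> at_risk m \<longrightarrow> Hc Y T gamma m k x = Yinf k x + (\<Sum>i\<in>{m..<k}. blip_residual i k x)"
    "AE x in M. x \<in> at_risk m \<longrightarrow> Hc Y T gamma m (k - 1) x
      = Yinf (k - 1) x + (\<Sum>i\<in>{m..<k - 1}. blip_residual i (k - 1) x)"
    by (rule Hc_blip_decomposition; use assms in simp)+
  ultimately show ?thesis
    using AE_space
  proof eventually_elim
    case (elim x)
    have x: "x \<in> space M" by fact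
    show ?case
    proof (cases "x \<in> at_risk m")
      case True
      have split: "(\<Sum>j\<in>{m..k}. bias_term j k x) = bias_term m k x + (\<Sum>j\<in>{m<..k}. bias_term j k x)"
        using assms by (simp add: sum.atLeast_Suc_atMost atLeastSucAtMost_greaterThanAtMost)
      have p1: "arm_prob m 1 x = 1 - arm_prob m 0 x" using elim True by simp
      have "Yinf k x - Yinf (k - 1) x - bias_term m k x
          = arm_prob m 1 x * arm_mean m 1 k x + arm_prob m 0 x * arm_mean m 0 k x
            + arm_residual m k 1 x + arm_residual m k 0 x"
        using binary[of m x] True assms
        by (auto simp: bias_term_def bias_star_def arm_residual_def indicator_def p1 algebra_simps)
      then show ?thesis
        using elim True x assms contrast_eq[OF x assms(2)]
        by (simp add: split pooled_increment_def contrast_residual_def)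
    next
      case False
      then have "x \<notin> arm i a" if "m \<le> i" for i a
        using that False order_trans[of "enat m" "enat i" "T x"] by auto
      then show ?thesis
        using False by (auto simp: pooled_increment_def contrast_residual_def arm_residual_def
          blip_residual_def bias_term_def intro!: sum.neutral)
    qed
  qed
qed

lemma cond_centered_LA_blip_residual:
  assumes "m \<le> i" "i \<le> K" "l \<le> K"
  shows "cond_centered M (LA m) (blip_residual i l)"
proof (cases "i = m")
  case True
  then show ?thesis
    using assms cond_centered_blip_residual[OF assms(2,3)]
    by (intro cond_centered_LA_of_L[where a = 1]) (auto simp: blip_residual_def)
next
  case False
  then show ?thesis
    using assms cond_centered_blip_residual[OF assms(2,3)] sets_LA_subset_L[of m i]
    by (auto intro: cond_centered_subalgebra)
qed

lemma cond_centered_contrast_residual: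
  assumes "m < k" "k \<le> K"
  shows "cond_centered M (LA m) (contrast_residual m k)"
proof -
  interpret L: finite_measure_subalgebra M "L m" by (rule finite_measure_subalgebra_L) (use assms in auto)
  interpret LA: finite_measure_subalgebra M "LA m" by (rule finite_measure_subalgebra_LA) (use assms in auto)
  have arm_residual: "cond_centered M (LA m) (arm_residual m k a)" for a
  proof (rule cond_centered_LA_of_L[where a = a])
    have "integrable M (\<lambda>y. Yinf k y - Yinf (k - 1) y)" using assms by (simp add: Yinf_int)
    from L.cond_centered_residual[OF arm_measurable this]
    show "cond_centered M (L m) (arm_residual m k a)" using assms by (simp add: arm_residual_def[abs_def])
  qed (use assms in \<open>auto simp: arm_residual_def\<close>)
  have "cond_centered M (LA m) (bias_term j k)" if "m < j" "j \<le> k" for j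
    using that assms cond_centered_bias_term[of j k] sets_LA_subset_L[of m j]
    by (auto intro: cond_centered_subalgebra)
  then show ?thesis
    using assms unfolding contrast_residual_def[abs_def]
    by (intro LA.cond_centered_add LA.cond_centered_diff LA.cond_centered_sum arm_residual
        cond_centered_LA_blip_residual) auto
qed

lemma pooled_increment_measurable: "m \<le> K \<Longrightarrow> pooled_increment m k \<in> borel_measurable (L m)"
  using at_risk_L[of m]
  unfolding pooled_increment_def[abs_def] cond_prob_given_def cond_exp_given_def by measurable

lemma integrable_pooled_increment:
  assumes "m \<le> K" "k \<le> K"
  shows "integrable M (pooled_increment m k)"
proof -
  have int: "integrable M (\<lambda>x. arm_prob m 1 x * arm_mean m 1 k x * indicator (arm m 1) x
    + arm_prob m 0 x * arm_mean m 0 k x * indicator (arm m 1) x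
    + (arm_prob m 1 x * arm_mean m 1 k x * indicator (arm m 0) x
    + arm_prob m 0 x * arm_mean m 0 k x * indicator (arm m 0) x))"
    using assms by (intro Bochner_Integration.integrable_add integrable_arm_prob_arm_mean) auto
  have eq: "x \<in> space M \<Longrightarrow> pooled_increment m k x = arm_prob m 1 x * arm_mean m 1 k x * indicator (arm m 1) x
    + arm_prob m 0 x * arm_mean m 0 k x * indicator (arm m 1) x
    + (arm_prob m 1 x * arm_mean m 1 k x * indicator (arm m 0) x
    + arm_prob m 0 x * arm_mean m 0 k x * indicator (arm m 0) x)" for x
    using binary[OF assms(1), of x] by (auto simp: pooled_increment_def indicator_def algebra_simps)
  show ?thesis using int by (subst Bochner_Integration.integrable_cong[OF refl eq])
qed

lemma Hc_measurable:
  assumes "n \<le> K" "l \<le> K"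
  shows "(\<lambda>x. Hc Y T gamma n l x) \<in> borel_measurable M"
proof -
  have [measurable]: "Y l \<in> borel_measurable M" "Y n \<in> borel_measurable M"
    using assms Y_int by auto
  have [measurable]: "(\<lambda>x. \<Sum>i\<in>{n..<l}. gamma i l x * indicator (arm i 1) x) \<in> borel_measurable M"
  proof (rule borel_measurable_sum)
    fix i assume "i \<in> {n..<l}"
    then have [measurable]: "arm i 1 \<in> sets M" using arm_measurable assms by auto
    show "(\<lambda>x. gamma i l x * indicator (arm i 1) x) \<in> borel_measurable M"
      unfolding blip_star_def cond_exp_given_def by measurable
  qed
  have "(\<lambda>x. if n < l then Y l x - (\<Sum>i\<in>{n..<l}. gamma i l x * indicator (arm i 1) x) else Y n x)
      \<in> borel_measurable M"
    by measurable
  then show ?thesis using assms by (subst measurable_cong[OF Hc_eq_sum_arm]) auto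
qed

lemma contrast_measurable:
  assumes "m \<le> k" "k \<le> K"
  shows "contrast m k \<in> borel_measurable M"
proof -
  have [measurable]: "arm j a \<in> sets M" if "j \<le> k" for j a
    using that assms arm_measurable by auto
  have [measurable]: "bias_term j k \<in> borel_measurable M" if "j \<le> k" for j
    using that unfolding bias_term_def[abs_def] cond_prob_given_def bias_star_def cond_exp_given_def
    by measurable
  have [measurable]: "(\<lambda>x. Hc Y T gamma m l x) \<in> borel_measurable M" if "l \<le> k" for l
    using that assms by (intro Hc_measurable) auto
  have "(\<lambda>x. Hc Y T gamma m k x - (\<Sum>j\<in>{m..k}. bias_term j k x) - Hc Y T gamma m (k - 1) x)
      \<in> borel_measurable M"
    by measurable
  then show ?thesis using assms by (subst measurable_cong[OF contrast_eq]) auto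
qed

lemma integrable_at_risk_contrast:
  assumes "m < k" "k \<le> K"
  shows "integrable M (\<lambda>x. indicator (at_risk m) x * contrast m k x)"
proof (rule integrable_cong_AE_imp)
  show "integrable M (\<lambda>x. pooled_increment m k x + contrast_residual m k x)"
    using assms integrable_pooled_increment cond_centered_contrast_residual
    by (simp add: cond_centered_def)
  show "(\<lambda>x. indicator (at_risk m) x * contrast m k x) \<in> borel_measurable M"
    using assms
    by (intro borel_measurable_times borel_measurable_indicator at_risk_measurable contrast_measurable) auto
  show "AE x in M. pooled_increment m k x + contrast_residual m k x
      = indicator (at_risk m) x * contrast m k x"
    using contrast_decomposition[OF assms] by (auto elim: AE_symmetric)
qed

lemma cond_exp_given_contrast_LA_eq_L:
  assumes "m < k" "k \<le> K"
  shows "AE x in M. enat m \<le> T x \<longrightarrow>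
    cond_exp_given M (LA m) (at_risk m) (contrast m k) x = cond_exp_given M (L m) (at_risk m) (contrast m k) x"
proof -
  interpret L: finite_measure_subalgebra M "L m" by (rule finite_measure_subalgebra_L) (use assms in auto)
  interpret LA: finite_measure_subalgebra M "LA m" by (rule finite_measure_subalgebra_LA) (use assms in auto)
  define X where "X = (\<lambda>x. indicator (at_risk m) x * contrast m k x)"
  have S: "at_risk m \<in> sets (L m)" "at_risk m \<in> sets (LA m)"
    using at_risk_L[of m] sets_L_subset_LA[of m] assms by auto
  have "subalgebra (LA m) (L m)"
    using sets_L_subset_LA[of m] by (simp add: subalgebra_def space_L space_LA)
  then have V: "integrable M (pooled_increment m k)" "pooled_increment m k \<in> borel_measurable (L m)"
    "pooled_increment m k \<in> borel_measurable (LA m)"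
    using assms integrable_pooled_increment pooled_increment_measurable
    by (auto intro: measurable_from_subalg)
  have R: "cond_centered M (LA m) (contrast_residual m k)" "cond_centered M (L m) (contrast_residual m k)"
    using assms cond_centered_contrast_residual cond_centered_subalgebra[OF _ sets_L_subset_LA] by auto
  have XVR: "AE x in M. X x = pooled_increment m k x + contrast_residual m k x"
    unfolding X_def by (rule contrast_decomposition[OF assms])
  have X: "integrable M X"
    unfolding X_def by (rule integrable_at_risk_contrast[OF assms])
  have "AE x in M. real_cond_exp M (LA m) X x = pooled_increment m k x"
    by (rule LA.real_cond_exp_eq_of_centered_decomposition[OF X V(1,3) R(1) XVR])
  moreover have "AE x in M. real_cond_exp M (L m) X x = pooled_increment m k x"
    by (rule L.real_cond_exp_eq_of_centered_decomposition[OF X V(1,2) R(2) XVR])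
  moreover have "AE x in M. real_cond_exp M (LA m) (indicator (at_risk m)) x = indicator (at_risk m) x"
    "AE x in M. real_cond_exp M (L m) (indicator (at_risk m)) x = indicator (at_risk m) x"
    using S assms at_risk_measurable
    by (auto intro!: LA.real_cond_exp_F_meas L.real_cond_exp_F_meas LA.integrable_indicator_real)
  ultimately show ?thesis
    unfolding cond_exp_given_def X_def[symmetric] by eventually_elim simp
qed

end

theorem lemma1:
  fixes M :: "'a measure" and MZ :: "'b measure" and K m k :: nat
    and Z :: "nat \<Rightarrow> 'a \<Rightarrow> 'b"
    and Y A Yinf :: "nat \<Rightarrow> 'a \<Rightarrow> real"
    and Ycf :: "nat \<Rightarrow> nat \<Rightarrow> 'a \<Rightarrow> real"
  assumes prob: "prob_space M"
    and Z_meas: "\<And>j. j \<le> K \<Longrightarrow> Z j \<in> M \<rightarrow>\<^sub>M MZ"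
    and Y_int: "\<And>j. j \<le> K \<Longrightarrow> integrable M (Y j)"
    and A_meas: "\<And>j. j \<le> K \<Longrightarrow> A j \<in> borel_measurable M"
    and Yinf_int: "\<And>j. j \<le> K \<Longrightarrow> integrable M (Yinf j)"
    and Ycf_int: "\<And>j l. j \<le> K \<Longrightarrow> l \<le> K \<Longrightarrow> integrable M (Ycf j l)"
    and binary: "\<And>j x. j \<le> K \<Longrightarrow> x \<in> space M \<Longrightarrow> A j x = 0 \<or> A j x = 1"
    and cf_before: "\<And>j l x. j \<le> K \<Longrightarrow> l \<le> j \<Longrightarrow> x \<in> space M \<Longrightarrow> Ycf j l x = Yinf l x"
    and consistency: "AE x in M. \<forall>l\<le>K.
        (T_init K A x < enat l \<longrightarrow> Y l x = Ycf (the_enat (T_init K A x)) l x)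
      \<and> (enat l \<le> T_init K A x \<longrightarrow> Y l x = Yinf l x)"
    and positivity: "\<And>j. j \<le> K \<Longrightarrow> AE x in M. enat j \<le> T_init K A x \<longrightarrow>
        0 < cond_exp_given M (L_sigma M MZ Z Y A j) {y \<in> space M. enat j \<le> T_init K A y}
              (indicator {y \<in> space M. A j y = 1}) x
      \<and> cond_exp_given M (L_sigma M MZ Z Y A j) {y \<in> space M. enat j \<le> T_init K A y}
              (indicator {y \<in> space M. A j y = 1}) x < 1"
    and mk: "m < k" "k \<le> K"
  shows "AE x in M. enat m \<le> T_init K A x \<longrightarrow>
      cond_exp_given M (LA_sigma M MZ Z Y A m) {y \<in> space M. enat m \<le> T_init K A y}
        (\<lambda>y. Hca_star M MZ K Z Y A Ycf Yinf m k y - Hc_star M MZ K Z Y A Ycf Yinf m (k - 1) y) x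
    = cond_exp_given M (L_sigma M MZ Z Y A m) {y \<in> space M. enat m \<le> T_init K A y}
        (\<lambda>y. Hca_star M MZ K Z Y A Ycf Yinf m k y - Hc_star M MZ K Z Y A Ycf Yinf m (k - 1) y) x"
proof -
  interpret treatment_initiation M MZ K Z Y A Yinf Ycf
    using prob Z_meas Y_int A_meas Yinf_int Ycf_int binary consistency
    by (rule treatment_initiation.intro)
  show ?thesis by (rule cond_exp_given_contrast_LA_eq_L[OF mk])
qed

end
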